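(* Let $H$ be a finite set of non-vertical hyperplanes in $\mathbb{R}^d$ in generic coordinate position, and let $C$ be a $d$-dimensional cell of $\mathcal{A}(H)$. Let $\sigma$ be a first-stage prism of $C$ whose ceiling lies on the hyperplane $h^+$ and whose floor lies on $h^-$. Then for each hyperplane $h\in H\setminus\{h^+,h^-\}$, at most one of the flats $h^+\cap h$ and $h^-\cap h$ supports a $(d-2)$-face of $\partial\sigma$ (other than faces created by the vertical walls). It is $h^+\cap h$ if $C$ lies below $h$, and $h^-\cap h$ if $C$ lies above $h$. Consequently, if $n$ denotes the number of hyperplanes of $H$ supporting facets of $C$, the vertical projection of $\sigma$ onto $x_d=0$ is a convex polyhedron with at most $n-1$ facets.
   Context: For a convex cell $C$, let $f^+$ be a facet on its upper boundary (with respect to $x_d$) lying on the hyperplane $h^+$, and $f^-$ a facet on its lower boundary lying on $h^-$. If the intersection $P$ of the vertical projections of $f^+$ and $f^-$ onto $x_d=0$ is $(d-1)$-dimensional, the set $\sigma=\{p\in C:\text{the projection of } p \text{ lies in } P\}$ is a first-stage prism, with ceiling on $h^+$ and floor on $h^-$. *)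

theory Defs
  imports "HOL-Analysis.Analysis"
begin

text \<open>Points of R^d are pairs (y, t) with y in R^(d-1) (an arbitrary Euclidean space 'a)
  and t = x_d the vertical coordinate. A non-vertical hyperplane is given by (a, b),
  namely the graph x_d = a . y + b.\<close>

definition hyp :: "'a::euclidean_space \<times> real \<Rightarrow> ('a \<times> real) set" where
  "hyp h = {(y, t). t = fst h \<bullet> y + snd h}"

definition above :: "'a::euclidean_space \<times> real \<Rightarrow> ('a \<times> real) set" where
  "above h = {(y, t). t > fst h \<bullet> y + snd h}"

definition below :: "'a::euclidean_space \<times> real \<Rightarrow> ('a \<times> real) set" where
  "below h = {(y, t). t < fst h \<bullet> y + snd h}"

definition vproj :: "'a \<times> real \<Rightarrow> 'a" where
  "vproj p = fst p"

definition generic_position :: "('a::euclidean_space \<times> real) set \<Rightarrow> bool" where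
  "generic_position H \<longleftrightarrow>
     (\<forall>S \<subseteq> H. S \<noteq> {} \<longrightarrow>
        (card S \<le> DIM('a \<times> real) \<longrightarrow>
            aff_dim (\<Inter> (hyp ` S)) = int DIM('a \<times> real) - int (card S)) \<and>
        (card S > DIM('a \<times> real) \<longrightarrow> \<Inter> (hyp ` S) = {}))"

definition dcell :: "('a::euclidean_space \<times> real) set \<Rightarrow> ('a \<times> real) set \<Rightarrow> bool" where
  "dcell H C \<longleftrightarrow> C \<in> components (- \<Union> (hyp ` H))"

definition first_stage_prism ::
  "('a::euclidean_space \<times> real) set \<Rightarrow> ('a \<times> real) set \<Rightarrow> 'a \<times> real \<Rightarrow> 'a \<times> real
   \<Rightarrow> ('a \<times> real) set \<Rightarrow> ('a \<times> real) set \<Rightarrow> ('a \<times> real) set \<Rightarrow> bool" where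
  "first_stage_prism H C hp hm fp fm \<sigma> \<longleftrightarrow>
     hp \<in> H \<and> hm \<in> H \<and>
     fp facet_of closure C \<and> fp \<subseteq> hyp hp \<and> C \<subseteq> below hp \<and>
     fm facet_of closure C \<and> fm \<subseteq> hyp hm \<and> C \<subseteq> above hm \<and>
     aff_dim (vproj ` fp \<inter> vproj ` fm) = int DIM('a) \<and>
     \<sigma> = {p \<in> closure C. vproj p \<in> vproj ` fp \<inter> vproj ` fm}"

definition supports_ridge :: "('a::euclidean_space \<times> real) set \<Rightarrow> ('a \<times> real) set \<Rightarrow> bool" where
  "supports_ridge \<sigma> L \<longleftrightarrow>
     (\<exists>F. F face_of \<sigma> \<and> aff_dim F = int DIM('a \<times> real) - 2 \<and> F \<subseteq> L)"

definition num_facet_hyps :: "('a::euclidean_space \<times> real) set \<Rightarrow> ('a \<times> real) set \<Rightarrow> nat" where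
  "num_facet_hyps H C = card {h \<in> H. \<exists>F. F facet_of closure C \<and> F \<subseteq> hyp h}"

end

theory Submission
  imports Defs
begin

text \<open>The closed cell is the polyhedron bounded by the closed sides of the hyperplanes of H
  facing C, and over the base P (the common projection of the two facets) the floor h^- lies
  below the ceiling h^+. If C lies above h, then h lies below the floor over P, so a point of
  the prism on h^+ \<inter> h is squeezed onto h^- as well; by genericity three hyperplanes
  cannot carry a (d - 2)-face. The case of C below h is symmetric.

  For the count, P is cut out by one inequality per h \<noteq> h^+, comparing h with the ceiling
  or the floor, whichever faces h across C. A facet of P on the inequality of h lifts to a
  (d - 2)-dimensional subset of the closed cell lying on h and on a facet hyperplane; such a set
  lies in no third hyperplane, which forces h to support a facet of C.\<close>

definition height :: "'a::euclidean_space \<times> real \<Rightarrow> 'a \<Rightarrow> real" where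
  "height h y = fst h \<bullet> y + snd h"

definition hyp_point :: "'a::euclidean_space \<times> real \<Rightarrow> 'a \<Rightarrow> 'a \<times> real" where
  "hyp_point h y = (y, height h y)"

lemma mem_hyp_iff: "p \<in> hyp h \<longleftrightarrow> snd p = height h (fst p)"
  by (cases p) (simp add: hyp_def height_def)

lemma hyp_point_in_hyp [simp]: "hyp_point h y \<in> hyp h"
  by (simp add: mem_hyp_iff hyp_point_def)

lemma fst_hyp_point [simp]: "fst (hyp_point h y) = y"
  and snd_hyp_point [simp]: "snd (hyp_point h y) = height h y"
  by (simp_all add: hyp_point_def)

lemma hyp_point_fst: "p \<in> hyp h \<Longrightarrow> hyp_point h (fst p) = p"
  by (cases p) (simp add: mem_hyp_iff hyp_point_def)

lemma hyp_as_hyperplane: "hyp h = {x. (- fst h, 1::real) \<bullet> x = snd h}"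
  by (auto simp: hyp_def)

lemma below_as_halfspace: "below h = {x. (- fst h, 1::real) \<bullet> x < snd h}"
  by (auto simp: below_def)

lemma above_as_halfspace: "above h = {x. (- fst h, 1::real) \<bullet> x > snd h}"
  by (auto simp: above_def)

lemma below_Int_above: "below h \<inter> above h = {}"
  by (auto simp: below_def above_def)

lemma aff_dim_le_hyp_point_image: "aff_dim G \<le> aff_dim (hyp_point h ` G)"
proof -
  have "fst ` hyp_point h ` G = G" by (simp add: image_image)
  then show ?thesis using aff_dim_linear_image_le[OF linear_fst, of "hyp_point h ` G"] by simp
qed

lemma DIM_prod_real_ge_2: "DIM('a::euclidean_space \<times> real) \<ge> 2"
  using DIM_positive[where 'a='a] by simp

lemma generic_position_aff_dim_Int2:
  fixes H :: "('a::euclidean_space \<times> real) set"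
  assumes "generic_position H" "g \<in> H" "h \<in> H" "g \<noteq> h"
  shows "aff_dim (hyp g \<inter> hyp h) = int DIM('a \<times> real) - 2"
proof -
  have "card {g, h} = 2" "{g, h} \<subseteq> H" using assms by auto
  then show ?thesis using assms(1) DIM_prod_real_ge_2[where 'a='a] unfolding generic_position_def
    by (metis (no_types, lifting) Inter_insert cInf_singleton image_empty image_insert
        insert_not_empty of_nat_numeral)
qed

lemma generic_position_aff_dim_Int3_le:
  fixes H :: "('a::euclidean_space \<times> real) set"
  assumes "generic_position H" "g \<in> H" "h \<in> H" "k \<in> H" "g \<noteq> h" "g \<noteq> k" "h \<noteq> k"
    and "X \<subseteq> hyp g \<inter> hyp h \<inter> hyp k"
  shows "aff_dim X \<le> int DIM('a \<times> real) - 3"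
proof -
  have c: "card {g, h, k} = 3" and s: "{g, h, k} \<subseteq> H" using assms by auto
  have I: "\<Inter> (hyp ` {g, h, k}) = hyp g \<inter> hyp h \<inter> hyp k" by auto
  show ?thesis
  proof (cases "3 \<le> DIM('a \<times> real)")
    case True
    then have "aff_dim (hyp g \<inter> hyp h \<inter> hyp k) = int DIM('a \<times> real) - 3"
      using assms(1) s c I unfolding generic_position_def by (metis insert_not_empty of_nat_numeral)
    then show ?thesis using aff_dim_subset[OF assms(8)] by simp
  next
    case False
    then have "hyp g \<inter> hyp h \<inter> hyp k = {}"
      using assms(1) s c I unfolding generic_position_def by (metis insert_not_empty not_le)
    then show ?thesis using assms(8) False by simp
  qed
qed

text \<open>A relative interior point of G lying on none of the hyperplanes would be an interior point
  of S.\<close>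
lemma face_of_inequalities_tight:
  fixes a :: "'i \<Rightarrow> 'b::euclidean_space"
  assumes fin: "finite I" and S: "S = {x. \<forall>i\<in>I. a i \<bullet> x \<le> b i}"
    and G: "G face_of S" "G \<noteq> {}" "G \<noteq> S"
  shows "\<exists>i\<in>I. a i \<noteq> 0 \<and> G \<subseteq> {x. a i \<bullet> x = b i}"
proof -
  have cS: "convex S" unfolding S by (auto simp: convex_def inner_add_right intro!: convex_bound_le)
  have "rel_interior G \<noteq> {}" using G face_of_imp_convex rel_interior_eq_empty by blast
  then obtain y where y: "y \<in> rel_interior G" by blast
  have yG: "y \<in> G" using y rel_interior_subset by blast
  have yS: "y \<in> S" using yG face_of_imp_subset[OF G(1)] by blast
  have "\<exists>i\<in>I. a i \<noteq> 0 \<and> a i \<bullet> y = b i"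
  proof (rule ccontr)
    assume "\<not> ?thesis"
    then have strict: "\<forall>i\<in>I. a i \<noteq> 0 \<longrightarrow> a i \<bullet> y < b i" using yS S by force
    define U where "U = (\<Inter>i\<in>I. {x. a i \<noteq> 0 \<longrightarrow> a i \<bullet> x < b i})"
    have "open U" unfolding U_def
    proof (rule open_INT[OF fin], rule ballI)
      fix i assume "i \<in> I"
      show "open {x. a i \<noteq> 0 \<longrightarrow> a i \<bullet> x < b i}"
        by (cases "a i = 0") (auto intro: open_halfspace_lt)
    qed
    moreover have "y \<in> U" using strict by (auto simp: U_def)
    moreover have "U \<subseteq> S" unfolding U_def S using yS S by (force simp: less_imp_le)
    ultimately have "y \<in> interior S" by (meson interiorI)
    then show False using face_of_disjoint_interior[OF G(1) G(3)] yG by blast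
  qed
  then obtain i where i: "i \<in> I" "a i \<noteq> 0" "a i \<bullet> y = b i" by blast
  have "(S \<inter> {x. a i \<bullet> x = b i}) face_of S"
    by (rule face_of_Int_supporting_hyperplane_le[OF cS]) (use i S in auto)
  moreover have "(S \<inter> {x. a i \<bullet> x = b i}) \<inter> rel_interior G \<noteq> {}" using y yS i by blast
  ultimately have "G \<subseteq> S \<inter> {x. a i \<bullet> x = b i}"
    using subset_of_face_of face_of_imp_subset[OF G(1)] by blast
  then show ?thesis using i by blast
qed

lemma facet_of_eq_Int_supporting_hyperplane:
  fixes P :: "'b::euclidean_space set"
  assumes "convex P" "aff_dim P = int DIM('b)" "c \<noteq> 0" "\<And>y. y \<in> P \<Longrightarrow> c \<bullet> y \<le> e"
    and "G facet_of P" "G \<subseteq> {y. c \<bullet> y = e}"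
  shows "G = P \<inter> {y. c \<bullet> y = e}"
proof (rule ccontr)
  assume ne: "G \<noteq> P \<inter> {y. c \<bullet> y = e}"
  let ?R = "P \<inter> {y. c \<bullet> y = e}"
  have R: "?R face_of P" using face_of_Int_supporting_hyperplane_le assms(1,4) by blast
  have GR: "G \<subseteq> ?R" using assms(5,6) face_of_imp_subset unfolding facet_of_def by blast
  have "?R \<noteq> P"
  proof
    assume "?R = P"
    then have "aff_dim P \<le> aff_dim {y. c \<bullet> y = e}" by (metis aff_dim_subset inf.cobounded2)
    also have "\<dots> = int DIM('b) - 1" using assms(3) by simp
    finally show False using assms(2) by simp
  qed
  then have "aff_dim ?R < aff_dim P" using face_of_aff_dim_lt assms(1) R by blast
  moreover have "aff_dim G < aff_dim ?R"
    using face_of_aff_dim_lt face_of_subset assms(5) GR R face_of_imp_convex ne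
    unfolding facet_of_def by blast
  ultimately show False using assms(5) unfolding facet_of_def by simp
qed

lemma facet_of_inequalities:
  fixes a :: "'i \<Rightarrow> 'b::euclidean_space"
  assumes "finite I" "P = {x. \<forall>i\<in>I. a i \<bullet> x \<le> b i}" "aff_dim P = int DIM('b)"
    and "G facet_of P"
  shows "\<exists>i\<in>I. G = P \<inter> {x. a i \<bullet> x = b i}"
proof -
  have "G face_of P" "G \<noteq> {}" "G \<noteq> P" using assms(4) unfolding facet_of_def by auto
  then obtain i where i: "i \<in> I" "a i \<noteq> 0" "G \<subseteq> {x. a i \<bullet> x = b i}"
    using face_of_inequalities_tight[OF assms(1,2)] by blast
  have "convex P" unfolding assms(2) by (auto simp: convex_def inner_add_right intro!: convex_bound_le)
  then have "G = P \<inter> {x. a i \<bullet> x = b i}"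
    using facet_of_eq_Int_supporting_hyperplane[OF _ assms(3) i(2) _ assms(4) i(3)] i(1) assms(2)
    by blast
  then show ?thesis using i(1) by blast
qed

locale arrangement_cell =
  fixes H :: "('a::euclidean_space \<times> real) set" and C :: "('a \<times> real) set"
  assumes finite_H: "finite H" and dcell: "dcell H C"
begin

lemma cell_component: "C \<in> components (- \<Union> (hyp ` H))"
  using dcell unfolding dcell_def .

lemma cell_nonempty: "C \<noteq> {}"
  using cell_component in_components_nonempty by blast

lemma cell_disjoint_hyp: "h \<in> H \<Longrightarrow> C \<inter> hyp h = {}"
  using cell_component in_components_subset by blast

lemma open_cell: "open C"
proof -
  have "closed (\<Union> (hyp ` H))"
    using finite_H by (intro closed_Union) (auto simp: hyp_as_hyperplane closed_hyperplane)
  then show ?thesis using cell_component open_components by blast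
qed

lemma cell_side: "h \<in> H \<Longrightarrow> C \<subseteq> below h \<or> C \<subseteq> above h"
proof (rule ccontr)
  assume h: "h \<in> H" and "\<not> (C \<subseteq> below h \<or> C \<subseteq> above h)"
  then obtain x y where xy: "x \<in> C" "y \<in> C" "x \<notin> below h" "y \<notin> above h" by blast
  then have "(- fst h, 1::real) \<bullet> y \<le> snd h" "snd h \<le> (- fst h, 1::real) \<bullet> x"
    by (auto simp: below_as_halfspace above_as_halfspace)
  then obtain z where "z \<in> C" "(- fst h, 1::real) \<bullet> z = snd h"
    using connected_ivt_hyperplane[OF in_components_connected[OF cell_component] xy(2,1)] by blast
  then show False using cell_disjoint_hyp[OF h] by (auto simp: hyp_as_hyperplane)
qed

lemma cell_below_not_above: "C \<subseteq> below h \<Longrightarrow> \<not> C \<subseteq> above h"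
  using cell_nonempty below_Int_above by blast

definition side_sign :: "'a \<times> real \<Rightarrow> real" where
  "side_sign h = (if C \<subseteq> below h then 1 else -1)"

definition wall_normal :: "'a \<times> real \<Rightarrow> 'a \<times> real" where
  "wall_normal h = side_sign h *\<^sub>R (- fst h, 1)"

definition wall_offset :: "'a \<times> real \<Rightarrow> real" where
  "wall_offset h = side_sign h * snd h"

lemma wall_le_iff:
  "wall_normal h \<bullet> x \<le> wall_offset h \<longleftrightarrow>
     (if C \<subseteq> below h then snd x \<le> height h (fst x) else height h (fst x) \<le> snd x)"
  by (cases x) (auto simp: wall_normal_def wall_offset_def side_sign_def height_def)

lemma wall_less_iff: "wall_normal h \<bullet> x < wall_offset h \<longleftrightarrow> x \<in> (if C \<subseteq> below h then below h else above h)"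
  by (cases x) (auto simp: wall_normal_def wall_offset_def side_sign_def below_def above_def)

lemma wall_normal_nonzero: "wall_normal h \<noteq> 0"
  by (simp add: wall_normal_def side_sign_def prod_eq_iff)

lemma hyp_eq_wall: "hyp h = {x. wall_normal h \<bullet> x = wall_offset h}"
  by (auto simp: wall_normal_def wall_offset_def side_sign_def hyp_def)

lemma cell_eq_Inter_sides: "C = (\<Inter>h\<in>H. {x. wall_normal h \<bullet> x < wall_offset h})"
  (is "C = ?D")
proof
  have "C \<subseteq> {x. wall_normal h \<bullet> x < wall_offset h}" if "h \<in> H" for h
    using cell_side[OF that] cell_below_not_above[of h] by (auto simp: wall_less_iff)
  then show "C \<subseteq> ?D" by blast
  have "x \<notin> hyp h" if "x \<in> ?D" "h \<in> H" for x h
    using that unfolding hyp_eq_wall by (metis (mono_tags) INT_iff less_irrefl mem_Collect_eq)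
  then have "?D \<subseteq> - \<Union> (hyp ` H)" by blast
  moreover have "connected ?D" by (intro convex_connected convex_INT) (auto intro: convex_halfspace_lt)
  moreover have "C \<inter> ?D \<noteq> {}" using \<open>C \<subseteq> ?D\<close> cell_nonempty by blast
  ultimately show "?D \<subseteq> C" using components_maximal[OF cell_component] by blast
qed

lemma closure_cell: "closure C = {x. \<forall>h\<in>H. wall_normal h \<bullet> x \<le> wall_offset h}"
proof -
  let ?F = "(\<lambda>h. {x. wall_normal h \<bullet> x < wall_offset h}) ` H"
  have "\<Inter> (rel_interior ` ?F) = \<Inter> ?F"
    by (simp add: rel_interior_open open_halfspace_lt image_image)
  also have "\<dots> \<noteq> {}" by (metis cell_eq_Inter_sides cell_nonempty)
  finally have "closure (\<Inter> ?F) = \<Inter> (closure ` ?F)"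
    by (intro closure_Inter_convex) (auto intro: convex_halfspace_lt)
  also have "\<dots> = {x. \<forall>h\<in>H. wall_normal h \<bullet> x \<le> wall_offset h}"
    using wall_normal_nonzero by (auto simp: image_image)
  finally show ?thesis by (metis cell_eq_Inter_sides)
qed

lemma mem_closure_cell_iff:
  "x \<in> closure C \<longleftrightarrow>
     (\<forall>h\<in>H. if C \<subseteq> below h then snd x \<le> height h (fst x) else height h (fst x) \<le> snd x)"
  by (simp add: closure_cell wall_le_iff)

lemma closure_cell_below: "x \<in> closure C \<Longrightarrow> h \<in> H \<Longrightarrow> C \<subseteq> below h \<Longrightarrow> snd x \<le> height h (fst x)"
  unfolding mem_closure_cell_iff by (metis (full_types))

lemma closure_cell_above: "x \<in> closure C \<Longrightarrow> h \<in> H \<Longrightarrow> C \<subseteq> above h \<Longrightarrow> height h (fst x) \<le> snd x"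
  unfolding mem_closure_cell_iff by (metis (full_types) cell_below_not_above)

lemma polyhedron_closure_cell: "polyhedron (closure C)"
proof -
  have "closure C = (\<Inter>h\<in>H. {x. wall_normal h \<bullet> x \<le> wall_offset h})"
    using closure_cell by auto
  then show ?thesis using finite_H by (auto intro: polyhedron_halfspace_le)
qed

lemma convex_closure_cell: "convex (closure C)"
  using polyhedron_closure_cell polyhedron_imp_convex by blast

lemma aff_dim_closure_cell: "aff_dim (closure C) = int DIM('a \<times> real)"
  using aff_dim_open[OF open_cell cell_nonempty] by simp

lemma face_closure_cell_Int_hyp: "h \<in> H \<Longrightarrow> (closure C \<inter> hyp h) face_of closure C"
  unfolding hyp_eq_wall
  by (rule face_of_Int_supporting_hyperplane_le[OF convex_closure_cell]) (simp add: closure_cell)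

lemma facet_subset_hyp:
  assumes "F facet_of closure C"
  shows "\<exists>h\<in>H. F \<subseteq> hyp h"
proof -
  have "F face_of closure C" "F \<noteq> {}" "F \<noteq> closure C" using assms unfolding facet_of_def by auto
  then show ?thesis
    using face_of_inequalities_tight[OF finite_H closure_cell] by (auto simp: hyp_eq_wall)
qed

lemma facet_eq_Int_hyp:
  assumes F: "F facet_of closure C" "F \<subseteq> hyp h" and h: "h \<in> H"
  shows "F = closure C \<inter> hyp h"
proof (rule ccontr)
  assume ne: "F \<noteq> closure C \<inter> hyp h"
  let ?R = "closure C \<inter> hyp h"
  have R: "?R face_of closure C" using face_closure_cell_Int_hyp[OF h] .
  have "?R \<noteq> closure C" using cell_nonempty cell_disjoint_hyp[OF h] closure_subset by blast
  then have "aff_dim ?R < aff_dim (closure C)"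
    using face_of_aff_dim_lt convex_closure_cell R by blast
  moreover have "F face_of ?R"
    using face_of_subset F R face_of_imp_subset unfolding facet_of_def by (metis le_inf_iff)
  then have "aff_dim F < aff_dim ?R"
    using face_of_aff_dim_lt R face_of_imp_convex ne by blast
  ultimately show False using F unfolding facet_of_def by simp
qed

definition facet_hyps :: "('a \<times> real) set" where
  "facet_hyps = {h \<in> H. \<exists>F. F facet_of closure C \<and> F \<subseteq> hyp h}"

lemma card_facet_hyps: "num_facet_hyps H C = card facet_hyps"
  by (simp add: num_facet_hyps_def facet_hyps_def)

lemma finite_facet_hyps: "finite facet_hyps"
  using finite_H by (simp add: facet_hyps_def)

end

locale generic_cell = arrangement_cell +
  assumes generic: "generic_position H"
begin

text \<open>The face of the closed cell cut out by h is the intersection of the facets containing it.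
  A facet on a third hyperplane would meet the ridge in a flat of dimension d - 3, so the only
  candidate is the facet on g, which would then lie in the (d - 2)-flat h \<inter> g.\<close>
lemma facet_hyp_if_ridge:
  assumes g: "g \<in> facet_hyps" and h: "h \<in> H" "h \<noteq> g"
    and X: "X \<subseteq> closure C \<inter> hyp g \<inter> hyp h" "aff_dim X \<ge> int DIM('a \<times> real) - 2"
  shows "h \<in> facet_hyps"
proof (rule ccontr)
  assume h_not: "h \<notin> facet_hyps"
  obtain f0 where f0: "f0 facet_of closure C" "f0 \<subseteq> hyp g" and gH: "g \<in> H"
    using g unfolding facet_hyps_def by blast
  let ?R = "closure C \<inter> hyp h"
  have "X \<noteq> {}" using X(2) DIM_prod_real_ge_2[where 'a='a] by auto
  then have "?R \<noteq> {}" using X(1) by blast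
  moreover have "?R \<noteq> closure C" using cell_nonempty cell_disjoint_hyp[OF h(1)] closure_subset by blast
  ultimately have R_eq: "?R = \<Inter>{F. F facet_of closure C \<and> ?R \<subseteq> F}"
    using face_of_polyhedron[OF polyhedron_closure_cell face_closure_cell_Int_hyp[OF h(1)]] by blast
  have "F = f0" if F: "F facet_of closure C" "?R \<subseteq> F" for F
  proof -
    obtain k where k: "k \<in> H" "F \<subseteq> hyp k" using facet_subset_hyp[OF F(1)] by blast
    have "k \<noteq> h" using h_not F k h(1) unfolding facet_hyps_def by blast
    have "k = g"
    proof (rule ccontr)
      assume "k \<noteq> g"
      have "X \<subseteq> hyp g \<inter> hyp h \<inter> hyp k" using X(1) F(2) k(2) by blast
      then have "aff_dim X \<le> int DIM('a \<times> real) - 3"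
        using generic_position_aff_dim_Int3_le[OF generic gH h(1) k(1)] h(2) \<open>k \<noteq> h\<close> \<open>k \<noteq> g\<close>
        by metis
      then show False using X(2) by simp
    qed
    then show "F = f0" using facet_eq_Int_hyp F(1) f0 k gH by metis
  qed
  then have "f0 \<subseteq> hyp g \<inter> hyp h" using R_eq f0(2) by blast
  then have "aff_dim f0 \<le> int DIM('a \<times> real) - 2"
    using generic_position_aff_dim_Int2[OF generic gH h(1)] h(2) aff_dim_subset by metis
  moreover have "aff_dim f0 = int DIM('a \<times> real) - 1"
    using f0(1) aff_dim_closure_cell unfolding facet_of_def by simp
  ultimately show False by simp
qed

end

locale cell_prism = generic_cell +
  fixes hp hm :: "'a \<times> real" and fp fm \<sigma> :: "('a \<times> real) set"
  assumes prism: "first_stage_prism H C hp hm fp fm \<sigma>"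
begin

definition base :: "'a set" where
  "base = vproj ` fp \<inter> vproj ` fm"

lemma ceiling_in_H: "hp \<in> H" and floor_in_H: "hm \<in> H"
  and cell_below_ceiling: "C \<subseteq> below hp" and cell_above_floor: "C \<subseteq> above hm"
  and aff_dim_base: "aff_dim base = int DIM('a)"
  and prism_eq: "\<sigma> = {p \<in> closure C. vproj p \<in> base}"
  using prism unfolding first_stage_prism_def base_def by auto

lemma ceiling_facet_eq: "fp = closure C \<inter> hyp hp"
  and floor_facet_eq: "fm = closure C \<inter> hyp hm"
  using prism facet_eq_Int_hyp unfolding first_stage_prism_def by auto

lemma ceiling_in_facet_hyps: "hp \<in> facet_hyps" and floor_in_facet_hyps: "hm \<in> facet_hyps"
  using prism unfolding first_stage_prism_def facet_hyps_def by auto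

lemma ceiling_ne_floor: "hp \<noteq> hm"
  using cell_below_ceiling cell_above_floor cell_below_not_above by blast

lemma vproj_image_Int_hyp: "y \<in> vproj ` (S \<inter> hyp h) \<longleftrightarrow> hyp_point h y \<in> S"
  by (force simp: vproj_def dest: hyp_point_fst)

lemma mem_base_iff: "y \<in> base \<longleftrightarrow> hyp_point hp y \<in> closure C \<and> hyp_point hm y \<in> closure C"
  using vproj_image_Int_hyp[of y "closure C" hp] vproj_image_Int_hyp[of y "closure C" hm]
  unfolding base_def ceiling_facet_eq[symmetric] floor_facet_eq[symmetric] by blast

lemma vproj_prism: "vproj ` \<sigma> = base"
proof
  show "vproj ` \<sigma> \<subseteq> base" using prism_eq by auto
  show "base \<subseteq> vproj ` \<sigma>"
  proof
    fix y assume "y \<in> base"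
    then have "hyp_point hp y \<in> \<sigma>" using prism_eq mem_base_iff by (simp add: vproj_def)
    then show "y \<in> vproj ` \<sigma>" by (metis fst_hyp_point image_eqI vproj_def)
  qed
qed

lemma floor_le_ceiling: "y \<in> base \<Longrightarrow> height hm y \<le> height hp y"
  using closure_cell_below[of "hyp_point hm y", OF _ ceiling_in_H cell_below_ceiling]
  by (simp add: mem_base_iff)

lemma ceiling_le_if_below: "y \<in> base \<Longrightarrow> h \<in> H \<Longrightarrow> C \<subseteq> below h \<Longrightarrow> height hp y \<le> height h y"
  using closure_cell_below[of "hyp_point hp y"] by (simp add: mem_base_iff)

lemma floor_ge_if_above: "y \<in> base \<Longrightarrow> h \<in> H \<Longrightarrow> C \<subseteq> above h \<Longrightarrow> height h y \<le> height hm y"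
  using closure_cell_above[of "hyp_point hm y"] by (simp add: mem_base_iff)

lemma no_ridge_on_ceiling_if_above:
  assumes h: "h \<in> H - {hp, hm}" and above: "C \<subseteq> above h"
  shows "\<not> supports_ridge \<sigma> (hyp hp \<inter> hyp h)"
proof
  assume "supports_ridge \<sigma> (hyp hp \<inter> hyp h)"
  then obtain F where F: "F face_of \<sigma>" "aff_dim F = int DIM('a \<times> real) - 2" "F \<subseteq> hyp hp \<inter> hyp h"
    unfolding supports_ridge_def by blast
  have "F \<subseteq> hyp hm"
  proof
    fix p assume "p \<in> F"
    then have p: "p \<in> \<sigma>" "p \<in> hyp hp" "p \<in> hyp h" using F face_of_imp_subset by blast+
    then have y: "fst p \<in> base" using prism_eq by (simp add: vproj_def)
    have "height h (fst p) \<le> height hm (fst p)" using floor_ge_if_above[OF y _ above] h by blast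
    with floor_le_ceiling[OF y] p(2,3) show "p \<in> hyp hm" by (simp add: mem_hyp_iff)
  qed
  then have "aff_dim F \<le> int DIM('a \<times> real) - 3"
    using generic_position_aff_dim_Int3_le[OF generic ceiling_in_H floor_in_H, of h F] h F(3)
      ceiling_ne_floor by blast
  then show False using F(2) by simp
qed

lemma no_ridge_on_floor_if_below:
  assumes h: "h \<in> H - {hp, hm}" and below: "C \<subseteq> below h"
  shows "\<not> supports_ridge \<sigma> (hyp hm \<inter> hyp h)"
proof
  assume "supports_ridge \<sigma> (hyp hm \<inter> hyp h)"
  then obtain F where F: "F face_of \<sigma>" "aff_dim F = int DIM('a \<times> real) - 2" "F \<subseteq> hyp hm \<inter> hyp h"
    unfolding supports_ridge_def by blast
  have "F \<subseteq> hyp hp"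
  proof
    fix p assume "p \<in> F"
    then have p: "p \<in> \<sigma>" "p \<in> hyp hm" "p \<in> hyp h" using F face_of_imp_subset by blast+
    then have y: "fst p \<in> base" using prism_eq by (simp add: vproj_def)
    have "height hp (fst p) \<le> height h (fst p)" using ceiling_le_if_below[OF y _ below] h by blast
    with floor_le_ceiling[OF y] p(2,3) show "p \<in> hyp hp" by (simp add: mem_hyp_iff)
  qed
  then have "aff_dim F \<le> int DIM('a \<times> real) - 3"
    using generic_position_aff_dim_Int3_le[OF generic ceiling_in_H floor_in_H, of h F] h F(3)
      ceiling_ne_floor by blast
  then show False using F(2) by simp
qed

text \<open>Over the base, the constraints that h imposes on the ceiling and the floor points reduce to
  one comparison of h with its partner, given floor \<le> ceiling (which is the constraint of the
  floor); the ceiling imposes none.\<close>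
definition partner :: "'a \<times> real \<Rightarrow> 'a \<times> real" where
  "partner h = (if h = hm \<or> C \<subseteq> below h then hp else hm)"

definition base_normal :: "'a \<times> real \<Rightarrow> 'a" where
  "base_normal h = side_sign h *\<^sub>R (fst (partner h) - fst h)"

definition base_offset :: "'a \<times> real \<Rightarrow> real" where
  "base_offset h = side_sign h * (snd h - snd (partner h))"

lemma base_normal_le_iff:
  "base_normal h \<bullet> y \<le> base_offset h \<longleftrightarrow>
     (if C \<subseteq> below h then height (partner h) y \<le> height h y else height h y \<le> height (partner h) y)"
  by (auto simp: base_normal_def base_offset_def side_sign_def height_def inner_diff_left)

lemma base_normal_eq_iff: "base_normal h \<bullet> y = base_offset h \<longleftrightarrow> height (partner h) y = height h y"
  by (auto simp: base_normal_def base_offset_def side_sign_def height_def inner_diff_left)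

lemma partner_in_facet_hyps: "partner h \<in> facet_hyps"
  using ceiling_in_facet_hyps floor_in_facet_hyps by (simp add: partner_def)

lemma ne_partner: "h \<noteq> hp \<Longrightarrow> h \<noteq> partner h"
  using ceiling_ne_floor by (auto simp: partner_def)

lemma base_eq_inequalities: "base = {y. \<forall>h\<in>H - {hp}. base_normal h \<bullet> y \<le> base_offset h}"
proof (intro set_eqI iffI)
  fix y assume y: "y \<in> base"
  have "base_normal h \<bullet> y \<le> base_offset h" if h: "h \<in> H - {hp}" for h
  proof (cases "C \<subseteq> below h")
    case True
    then show ?thesis using ceiling_le_if_below[OF y] h by (simp add: base_normal_le_iff partner_def)
  next
    case False
    then have "C \<subseteq> above h" using cell_side h by blast
    then show ?thesis using False floor_ge_if_above[OF y] floor_le_ceiling[OF y] h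
      by (simp add: base_normal_le_iff partner_def)
  qed
  then show "y \<in> {y. \<forall>h\<in>H - {hp}. base_normal h \<bullet> y \<le> base_offset h}" by blast
next
  fix y assume "y \<in> {y. \<forall>h\<in>H - {hp}. base_normal h \<bullet> y \<le> base_offset h}"
  then have constraint: "\<And>h. h \<in> H - {hp} \<Longrightarrow> if C \<subseteq> below h then height (partner h) y \<le> height h y
      else height h y \<le> height (partner h) y"
    by (simp add: base_normal_le_iff)
  have not_below_floor: "\<not> C \<subseteq> below hm" using cell_above_floor cell_below_not_above by blast
  have floor_le: "height hm y \<le> height hp y"
    using constraint[of hm] floor_in_H ceiling_ne_floor not_below_floor by (simp add: partner_def)
  have "if C \<subseteq> below h then height hp y \<le> height h y else height h y \<le> height hm y"
    if h: "h \<in> H" for h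
  proof (cases "h = hp")
    case True
    then show ?thesis using cell_below_ceiling by simp
  next
    case False
    then show ?thesis using constraint[of h] h by (cases "C \<subseteq> below h") (auto simp: partner_def split: if_splits)
  qed
  then show "y \<in> base"
    using floor_le by (force simp: mem_base_iff mem_closure_cell_iff split: if_splits)
qed

lemma polyhedron_base: "polyhedron base"
proof -
  have "base = (\<Inter>h\<in>H - {hp}. {y. base_normal h \<bullet> y \<le> base_offset h})"
    using base_eq_inequalities by auto
  then show ?thesis using finite_H by (auto intro: polyhedron_halfspace_le)
qed

lemma finite_facets_base: "finite {G. G facet_of base}"
  using finite_polyhedron_faces[OF polyhedron_base] by (rule finite_subset[rotated]) (auto simp: facet_of_def)

lemma facet_of_base:
  assumes G: "G facet_of base"
  shows "\<exists>h\<in>facet_hyps - {hp}. G = base \<inter> {y. base_normal h \<bullet> y = base_offset h}"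
proof -
  obtain h where h: "h \<in> H - {hp}" and G_eq: "G = base \<inter> {y. base_normal h \<bullet> y = base_offset h}"
    using facet_of_inequalities[OF _ base_eq_inequalities aff_dim_base G] finite_H by blast
  let ?X = "hyp_point (partner h) ` G"
  have "hyp_point (partner h) y \<in> closure C" if "y \<in> base" for y
    using that by (simp add: mem_base_iff partner_def)
  then have "?X \<subseteq> closure C \<inter> hyp (partner h) \<inter> hyp h"
    using G_eq by (auto simp: base_normal_eq_iff mem_hyp_iff)
  moreover have "aff_dim G = int DIM('a) - 1" using G aff_dim_base unfolding facet_of_def by simp
  then have "aff_dim ?X \<ge> int DIM('a \<times> real) - 2" using aff_dim_le_hyp_point_image[of G] by simp
  moreover have "h \<noteq> partner h" using ne_partner h by blast
  ultimately have "h \<in> facet_hyps" using facet_hyp_if_ridge[OF partner_in_facet_hyps] h by blast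
  then show ?thesis using h G_eq by blast
qed

lemma card_facets_base: "card {G. G facet_of base} \<le> card facet_hyps - 1"
proof -
  have "{G. G facet_of base}
      \<subseteq> (\<lambda>h. base \<inter> {y. base_normal h \<bullet> y = base_offset h}) ` (facet_hyps - {hp})"
    using facet_of_base by blast
  then have "card {G. G facet_of base} \<le> card (facet_hyps - {hp})"
    using finite_facet_hyps by (meson card_image_le card_mono finite_Diff finite_imageI order_trans)
  then show ?thesis using ceiling_in_facet_hyps finite_facet_hyps by simp
qed

end

theorem mainTheorem12:
  fixes H :: "('a::euclidean_space \<times> real) set"
    and C \<sigma> fp fm :: "('a \<times> real) set"
    and hp hm :: "'a \<times> real"
  assumes "finite H"
    and "generic_position H"
    and "dcell H C"
    and "first_stage_prism H C hp hm fp fm \<sigma>"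
  shows "(\<forall>h \<in> H - {hp, hm}.
            \<not> (supports_ridge \<sigma> (hyp hp \<inter> hyp h) \<and> supports_ridge \<sigma> (hyp hm \<inter> hyp h)) \<and>
            (C \<subseteq> below h \<longrightarrow> \<not> supports_ridge \<sigma> (hyp hm \<inter> hyp h)) \<and>
            (C \<subseteq> above h \<longrightarrow> \<not> supports_ridge \<sigma> (hyp hp \<inter> hyp h)))
         \<and> polyhedron (vproj ` \<sigma>) \<and> convex (vproj ` \<sigma>)
         \<and> finite {G. G facet_of vproj ` \<sigma>}
         \<and> card {G. G facet_of vproj ` \<sigma>} \<le> num_facet_hyps H C - 1"
proof -
  interpret cell_prism H C hp hm fp fm \<sigma>
    by unfold_locales (use assms in auto)
  have "\<not> (supports_ridge \<sigma> (hyp hp \<inter> hyp h) \<and> supports_ridge \<sigma> (hyp hm \<inter> hyp h)) \<and>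
      (C \<subseteq> below h \<longrightarrow> \<not> supports_ridge \<sigma> (hyp hm \<inter> hyp h)) \<and>
      (C \<subseteq> above h \<longrightarrow> \<not> supports_ridge \<sigma> (hyp hp \<inter> hyp h))"
    if h: "h \<in> H - {hp, hm}" for h
    using cell_side[of h] h no_ridge_on_ceiling_if_above[OF h] no_ridge_on_floor_if_below[OF h]
    by blast
  then show ?thesis
    using polyhedron_base polyhedron_imp_convex finite_facets_base card_facets_base
    by (simp add: vproj_prism card_facet_hyps)
qed

end
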